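(* Let $\mathcal{S}_1,\mathcal{S}_2\in\mathfrak{P}(X)$ with $\mathcal{S}_1\preceq\mathcal{S}_2$. Then for all $(S_1,H_1)\in\mathcal{S}_1$ and $(S_2,H_2)\in\mathcal{S}_2$, if $(S_2,H_2)<(S_1,H_1)$ then $(S_2,H_2)\in\mathcal{S}_1$, $H_2=\emptyset$ and $H_1=S_2$.
   Context: Let $X$ be a finite non-empty set. A set pair system on $X$ is a set of ordered pairs $(S,H)$ of subsets of $X$ with $S\ne\emptyset$ and $S\cap H=\emptyset$. On set pairs, $(S_1,H_1)\le(S_2,H_2)$ iff they are equal or one of: $S_1\cup H_1\subseteq S_2$; $S_1\cup H_1\subseteq H_2$; $S_1\subsetneq S_2$ and $H_1=H_2\ne\emptyset$; and $<$ means $\le$ and distinct. For set pair systems, $\mathcal{S}_1\preceq\mathcal{S}_2$ iff (SP1) for every $(S_1,H_1)\in\mathcal{S}_1$ there is $(S_2,H_2)\in\mathcal{S}_2$ with $(S_1,H_1)\le(S_2,H_2)$, and (SP2) for every $(S_2,H_2)\in\mathcal{S}_2$ with $H_2\ne\emptyset$, if some $(S_1,H_1)\in\mathcal{S}_1$ has $H_1=H_2$ then some such $(S_1,H_1)$ satisfies $(S_1,H_1)\le(S_2,H_2)$. A polestar system is a set pair system $\mathcal{S}$ with (PL1) $\mathcal{P}(\mathcal{S})=\{S:(S,H)\in\mathcal{S}\}$ is a partition of $X$; (PL2) distinct $(S,H),(S',H')\in\mathcal{S}$ have $S\ne S'$; (PL3) for each $(S,H)\in\mathcal{S}$ with $H\ne\emptyset$,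 $(H,\emptyset)\in\mathcal{S}$ and there is exactly one $(S',H')\in\mathcal{S}$ with $(S',H')\ne(S,H)$ and $H'=H$. $\mathfrak{P}(X)$ denotes the set of polestar systems on $X$. *)

theory Defs
  imports Main
begin

type_synonym 'a set_pair = "'a set \<times> 'a set"

definition set_pair_system :: "'a set \<Rightarrow> 'a set_pair set \<Rightarrow> bool" where
  "set_pair_system X \<S> \<longleftrightarrow>
     (\<forall>(S, H) \<in> \<S>. S \<subseteq> X \<and> H \<subseteq> X \<and> S \<noteq> {} \<and> S \<inter> H = {})"

definition sp_le :: "'a set_pair \<Rightarrow> 'a set_pair \<Rightarrow> bool" where
  "sp_le p q \<longleftrightarrow> (case p of (S1, H1) \<Rightarrow> case q of (S2, H2) \<Rightarrow>
     p = q \<or> S1 \<union> H1 \<subseteq> S2 \<or> S1 \<union> H1 \<subseteq> H2 \<or> (S1 \<subset> S2 \<and> H1 = H2 \<and> H2 \<noteq> {}))"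

definition sp_less :: "'a set_pair \<Rightarrow> 'a set_pair \<Rightarrow> bool" where
  "sp_less p q \<longleftrightarrow> sp_le p q \<and> p \<noteq> q"

definition sps_le :: "'a set_pair set \<Rightarrow> 'a set_pair set \<Rightarrow> bool" where
  "sps_le \<S>1 \<S>2 \<longleftrightarrow>
     (\<forall>p1 \<in> \<S>1. \<exists>p2 \<in> \<S>2. sp_le p1 p2) \<and>
     (\<forall>(S2, H2) \<in> \<S>2. H2 \<noteq> {} \<longrightarrow>
        (\<exists>(S1, H1) \<in> \<S>1. H1 = H2) \<longrightarrow>
        (\<exists>(S1, H1) \<in> \<S>1. H1 = H2 \<and> sp_le (S1, H1) (S2, H2)))"

definition is_partition :: "'a set \<Rightarrow> 'a set set \<Rightarrow> bool" where
  "is_partition X P \<longleftrightarrow> (\<forall>A \<in> P. A \<noteq> {}) \<and> \<Union>P = X \<and>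
     (\<forall>A \<in> P. \<forall>B \<in> P. A \<noteq> B \<longrightarrow> A \<inter> B = {})"

definition polestar_system :: "'a set \<Rightarrow> 'a set_pair set \<Rightarrow> bool" where
  "polestar_system X \<S> \<longleftrightarrow> set_pair_system X \<S> \<and>
     is_partition X (fst ` \<S>) \<and>
     (\<forall>p \<in> \<S>. \<forall>q \<in> \<S>. p \<noteq> q \<longrightarrow> fst p \<noteq> fst q) \<and>
     (\<forall>(S, H) \<in> \<S>. H \<noteq> {} \<longrightarrow>
        (H, {}) \<in> \<S> \<and> (\<exists>!q. q \<in> \<S> \<and> q \<noteq> (S, H) \<and> snd q = H))"

end

theory Submission
  imports Defs
begin

text \<open>Every block of \<open>\<S>\<^sub>1\<close> lies inside a block of \<open>\<S>\<^sub>2\<close>, and blocks of one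
  polestar system are incomparable under inclusion. So whenever \<open>(S\<^sub>2, H\<^sub>2) < (S\<^sub>1, H\<^sub>1)\<close>,
  any set of \<open>\<S>\<^sub>1\<close> containing \<open>S\<^sub>2\<close> must equal \<open>S\<^sub>2\<close>. This rules out
  \<open>S\<^sub>2 \<subset> S\<^sub>1\<close>; if \<open>S\<^sub>2 \<union> H\<^sub>2 \<subseteq> S\<^sub>1\<close> it gives \<open>S\<^sub>1 = S\<^sub>2\<close> and \<open>H\<^sub>2 = {}\<close>,
  and (SP1) applied to the common block forces \<open>H\<^sub>1 = {}\<close> too, contradicting distinctness;
  in the remaining case \<open>S\<^sub>2 \<union> H\<^sub>2 \<subseteq> H\<^sub>1\<close> it forces \<open>S\<^sub>2 = H\<^sub>1\<close>, where
  \<open>(H\<^sub>1, {}) \<in> \<S>\<^sub>1\<close> by (PL3).\<close>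

lemma polestar_system_pairD:
  assumes "polestar_system X \<S>" "(S, H) \<in> \<S>"
  shows "S \<noteq> {}" "S \<inter> H = {}"
  using assms unfolding polestar_system_def set_pair_system_def by fast+

lemma polestar_system_pole:
  assumes "polestar_system X \<S>" "(S, H) \<in> \<S>" "H \<noteq> {}"
  shows "(H, {}) \<in> \<S>"
  using assms unfolding polestar_system_def by fast

lemma polestar_system_subset_block:
  assumes "polestar_system X \<S>" "(S, H) \<in> \<S>" "(T, U) \<in> \<S>" "S \<subseteq> T"
  shows "S = T" "H = U"
proof -
  have "S \<noteq> {}" using polestar_system_pairD(1)[OF assms(1,2)] .
  with assms show "S = T" unfolding polestar_system_def is_partition_def
    by (metis (no_types, lifting) fst_conv image_eqI inf.absorb_iff2)
  with assms show "H = U" unfolding polestar_system_def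
    by (metis fst_conv prod.inject)
qed

lemma sps_le_polestar_covering_block:
  assumes "polestar_system X \<S>1" "polestar_system X \<S>2" "sps_le \<S>1 \<S>2" "(A, B) \<in> \<S>1"
  obtains T U where "(T, U) \<in> \<S>2" "A \<subseteq> T"
proof -
  obtain S' H' where in2: "(S', H') \<in> \<S>2" and le: "sp_le (A, B) (S', H')"
    using assms(3,4) unfolding sps_le_def by fast
  show thesis
  proof (cases "A \<union> B \<subseteq> H'")
    case True
    with polestar_system_pairD(1)[OF assms(1,4)] have "H' \<noteq> {}" by blast
    with True polestar_system_pole[OF assms(2) in2] show thesis by (blast intro: that)
  next
    case False
    with le in2 show thesis unfolding sp_le_def by (auto intro: that)
  qed
qed

lemma sps_le_polestar_common_block:
  assumes "polestar_system X \<S>1" "polestar_system X \<S>2" "sps_le \<S>1 \<S>2"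
    and "(A, B) \<in> \<S>1" "(A, U) \<in> \<S>2"
  shows "B = U \<or> B = {}"
proof -
  obtain S' H' where in2: "(S', H') \<in> \<S>2" and le: "sp_le (A, B) (S', H')"
    using assms(3,4) unfolding sps_le_def by fast
  have disj: "A \<inter> B = {}" using polestar_system_pairD(2)[OF assms(1,4)] .
  consider "(A, B) = (S', H')" | "A \<union> B \<subseteq> S'" | "A \<union> B \<subseteq> H'" | "A \<subset> S'"
    using le unfolding sp_le_def by auto
  then show ?thesis
  proof cases
    case 1
    with assms(2,5) in2 show ?thesis using polestar_system_subset_block(2) by blast
  next
    case 2
    with assms(2,5) in2 have "A = S'" using polestar_system_subset_block(1) by blast
    with 2 disj show ?thesis by blast
  next
    case 3
    with polestar_system_pairD(1)[OF assms(1,4)] have "H' \<noteq> {}" by blast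
    with 3 assms(2,5) polestar_system_pole[OF assms(2) in2] have "A = H'"
      using polestar_system_subset_block(1) by blast
    with 3 disj show ?thesis by blast
  next
    case 4
    with assms(2,5) in2 show ?thesis using polestar_system_subset_block(1) by blast
  qed
qed

theorem mainTheorem6:
  fixes X :: "'a set" and \<S>1 \<S>2 :: "'a set_pair set"
  assumes "finite X" and "X \<noteq> {}"
    and "polestar_system X \<S>1" and "polestar_system X \<S>2"
    and "sps_le \<S>1 \<S>2"
  shows "\<forall>S1 H1 S2 H2. (S1, H1) \<in> \<S>1 \<longrightarrow> (S2, H2) \<in> \<S>2 \<longrightarrow>
           sp_less (S2, H2) (S1, H1) \<longrightarrow>
           (S2, H2) \<in> \<S>1 \<and> H2 = {} \<and> H1 = S2"
proof (intro allI impI)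
  fix S1 H1 S2 H2
  assume p1: "(S1, H1) \<in> \<S>1" and p2: "(S2, H2) \<in> \<S>2" and lt: "sp_less (S2, H2) (S1, H1)"
  note block = sps_le_polestar_covering_block[OF assms(3-5)]
  note same = polestar_system_subset_block(1)[OF assms(4) p2]
  have ne: "(S2, H2) \<noteq> (S1, H1)" using lt unfolding sp_less_def by simp
  have ne2: "S2 \<noteq> {}" and dj2: "S2 \<inter> H2 = {}" using polestar_system_pairD[OF assms(4) p2] .
  consider "S2 \<union> H2 \<subseteq> S1" | "S2 \<union> H2 \<subseteq> H1" | "S2 \<subset> S1" "H2 = H1"
    using lt unfolding sp_less_def sp_le_def by auto
  then show "(S2, H2) \<in> \<S>1 \<and> H2 = {} \<and> H1 = S2"
  proof cases
    case 1
    obtain T U where "(T, U) \<in> \<S>2" "S1 \<subseteq> T" using block[OF p1] .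
    with 1 same have "S1 = S2" by blast
    with 1 dj2 have "H2 = {}" by blast
    with \<open>S1 = S2\<close> sps_le_polestar_common_block[OF assms(3-5) p1] p2 ne show ?thesis by auto
  next
    case 2
    with ne2 have h1: "(H1, {}) \<in> \<S>1" using polestar_system_pole[OF assms(3) p1] by blast
    obtain T U where "(T, U) \<in> \<S>2" "H1 \<subseteq> T" using block[OF h1] .
    with 2 same have "S2 = H1" by blast
    moreover from 2 dj2 have "H2 = {}" unfolding \<open>S2 = H1\<close> by blast
    ultimately show ?thesis using h1 by simp
  next
    case 3
    obtain T U where "(T, U) \<in> \<S>2" "S1 \<subseteq> T" using block[OF p1] .
    with 3 same have "S2 = T" by blast
    with 3 \<open>S1 \<subseteq> T\<close> show ?thesis by blast
  qed
qed

end
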